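(* Consider the single-storage problem (P1) with round-trip efficiency $\eta\in(0,1]$, i.e. with the constraint $S_t-S_{t-1}\le p_t^+$ replaced by $S_t-S_{t-1}\le\eta\,p_t^+$. With $0\le S_0\le\overline{S}$, $\overline{x}\ge 0$, the problem is feasible and, if the qualified capacity is $\overline{S}$ or $\overline{x}$, the resulting EUE (average over finitely many profiles of $\sum_tp_t^-+$ optimal value) is continuous, piecewise linear and non-increasing in the qualified capacity, so the MRI is non-negative wherever it exists.
   Context: For real $P_t$ (net capacity surplus at hour $t$), $p_t^+=\max\{P_t,0\}$, $p_t^-=\max\{-P_t,0\}$. Problem (P1): minimize $\sum_{t=1}^T\min\{0,S_t-S_{t-1}\}$ over $S_1,\dots,S_T$ subject to $0\le S_t\le\overline{S}$, $-\overline{x}\le S_t-S_{t-1}\le\overline{x}$, $-p_t^-\le S_t-S_{t-1}\le p_t^+$ for all $t$, with $S_0$ a given constant. $\mathrm{MRI}=-\partial\mathrm{EUE}/\partial\mathrm{QC}$. *)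

theory Defs
  imports "HOL-Analysis.Analysis"
begin

definition pplus :: "real \<Rightarrow> real" where "pplus p = max p 0"
definition pminus :: "real \<Rightarrow> real" where "pminus p = max (- p) 0"

definition feasible ::
  "real \<Rightarrow> real \<Rightarrow> real \<Rightarrow> real \<Rightarrow> nat \<Rightarrow> (nat \<Rightarrow> real) \<Rightarrow> (nat \<Rightarrow> real) \<Rightarrow> bool" where
  "feasible eta Sbar xbar S0 T P S \<longleftrightarrow>
     S 0 = S0 \<and>
     (\<forall>t\<in>{1..T}. 0 \<le> S t \<and> S t \<le> Sbar \<and>
        - xbar \<le> S t - S (t - 1) \<and> S t - S (t - 1) \<le> xbar \<and>
        - pminus (P t) \<le> S t - S (t - 1) \<and> S t - S (t - 1) \<le> eta * pplus (P t))"

definition objective :: "nat \<Rightarrow> (nat \<Rightarrow> real) \<Rightarrow> real" where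
  "objective T S = (\<Sum>t=1..T. min 0 (S t - S (t - 1)))"

definition optval ::
  "real \<Rightarrow> real \<Rightarrow> real \<Rightarrow> real \<Rightarrow> nat \<Rightarrow> (nat \<Rightarrow> real) \<Rightarrow> real" where
  "optval eta Sbar xbar S0 T P = Inf {objective T S | S. feasible eta Sbar xbar S0 T P S}"

definition EUE ::
  "real \<Rightarrow> real \<Rightarrow> real \<Rightarrow> real \<Rightarrow> nat \<Rightarrow> nat \<Rightarrow> (nat \<Rightarrow> nat \<Rightarrow> real) \<Rightarrow> real" where
  "EUE eta Sbar xbar S0 T K P =
     (\<Sum>k<K. (\<Sum>t=1..T. pminus (P k t)) + optval eta Sbar xbar S0 T (P k)) / real K"

definition piecewise_linear_from :: "real \<Rightarrow> (real \<Rightarrow> real) \<Rightarrow> bool" where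
  "piecewise_linear_from a f \<longleftrightarrow>
     (\<exists>B. finite B \<and> (\<forall>x y. a \<le> x \<longrightarrow> x < y \<longrightarrow> {x<..<y} \<inter> B = {} \<longrightarrow>
        (\<exists>m c. \<forall>z\<in>{x..y}. f z = m * z + c)))"

definition MRI_is :: "(real \<Rightarrow> real) \<Rightarrow> real set \<Rightarrow> real \<Rightarrow> real \<Rightarrow> bool" where
  "MRI_is f D q m \<longleftrightarrow> (\<exists>d. (f has_real_derivative d) (at q within D) \<and> m = - d)"

end

theory Submission
  imports Defs
begin

text \<open>Charging as much as the limits allow in every hour with a surplus and discharging as much
  as they allow in every hour with a deficit is optimal for (P1): by induction over the hours,
  this greedy trajectory has discharged at least as much and charged at least as much energy as
  any feasible one. The greedy storage levels are built from either capacity by sums, minima and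
  maxima of affine functions, so the EUE is, as a function of that capacity, continuous with
  finitely many affine pieces, hence piecewise linear. Raising a capacity only enlarges the
  feasible set, so the EUE is non-increasing, and the derivative of a non-increasing function
  is non-positive wherever it exists.\<close>

definition continuous_piecewise_affine :: "(real \<Rightarrow> real) \<Rightarrow> bool" where
  "continuous_piecewise_affine F \<longleftrightarrow> continuous_on UNIV F \<and>
     (\<exists>A. finite A \<and> (\<forall>z. \<exists>(m, c)\<in>A. F z = m * z + c))"

lemma continuous_piecewise_affineI:
  assumes "continuous_on UNIV F" "finite A" "\<And>z. \<exists>(m, c)\<in>A. F z = m * z + c"
  shows "continuous_piecewise_affine F"
  using assms unfolding continuous_piecewise_affine_def by blast

lemma continuous_piecewise_affine_affine: "continuous_piecewise_affine (\<lambda>z. m * z + c)"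
  by (rule continuous_piecewise_affineI[of _ "{(m, c)}"]) (auto intro: continuous_intros)

lemma continuous_piecewise_affine_const: "continuous_piecewise_affine (\<lambda>z. c)"
  using continuous_piecewise_affine_affine[of 0 c] by simp

lemma continuous_piecewise_affine_ident: "continuous_piecewise_affine (\<lambda>z. z)"
  using continuous_piecewise_affine_affine[of 1 0] by simp

lemma continuous_piecewise_affine_add:
  assumes "continuous_piecewise_affine F" "continuous_piecewise_affine G"
  shows "continuous_piecewise_affine (\<lambda>z. F z + G z)"
proof -
  obtain A where F: "continuous_on UNIV F" "finite A" "\<And>z. \<exists>(m, c)\<in>A. F z = m * z + c"
    using assms(1) unfolding continuous_piecewise_affine_def by blast
  obtain B where G: "continuous_on UNIV G" "finite B" "\<And>z. \<exists>(m, c)\<in>B. G z = m * z + c"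
    using assms(2) unfolding continuous_piecewise_affine_def by blast
  let ?AB = "(\<lambda>((m, c), (m', c')). (m + m', c + c')) ` (A \<times> B)"
  have "\<exists>(m, c)\<in>?AB. F z + G z = m * z + c" for z
  proof -
    obtain m c where mc: "(m, c) \<in> A" "F z = m * z + c"
      using F(3)[of z] by blast
    obtain m' c' where mc': "(m', c') \<in> B" "G z = m' * z + c'"
      using G(3)[of z] by blast
    have "(m + m', c + c') \<in> ?AB"
      using mc(1) mc'(1) by (auto intro: rev_image_eqI[of "((m, c), (m', c'))"])
    with mc(2) mc'(2) show ?thesis
      by (intro bexI[of _ "(m + m', c + c')"]) (simp_all add: algebra_simps)
  qed
  with F G show ?thesis
    by (intro continuous_piecewise_affineI[of _ ?AB] continuous_intros) auto
qed

lemma continuous_piecewise_affine_cmult: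
  assumes "continuous_piecewise_affine F"
  shows "continuous_piecewise_affine (\<lambda>z. r * F z)"
proof -
  obtain A where F: "continuous_on UNIV F" "finite A" "\<And>z. \<exists>(m, c)\<in>A. F z = m * z + c"
    using assms unfolding continuous_piecewise_affine_def by blast
  let ?rA = "(\<lambda>(m, c). (r * m, r * c)) ` A"
  have "\<exists>(m, c)\<in>?rA. r * F z = m * z + c" for z
  proof -
    obtain m c where mc: "(m, c) \<in> A" "F z = m * z + c"
      using F(3)[of z] by blast
    then have "(r * m, r * c) \<in> ?rA"
      by (auto intro: rev_image_eqI[of "(m, c)"])
    with mc(2) show ?thesis
      by (intro bexI[of _ "(r * m, r * c)"]) (simp_all add: algebra_simps)
  qed
  with F show ?thesis
    by (intro continuous_piecewise_affineI[of _ ?rA] continuous_intros) auto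
qed

lemma continuous_piecewise_affine_diff:
  assumes "continuous_piecewise_affine F" "continuous_piecewise_affine G"
  shows "continuous_piecewise_affine (\<lambda>z. F z - G z)"
  using continuous_piecewise_affine_add[OF assms(1) continuous_piecewise_affine_cmult[OF assms(2), of "-1"]]
  by simp

lemma continuous_piecewise_affine_divide:
  assumes "continuous_piecewise_affine F"
  shows "continuous_piecewise_affine (\<lambda>z. F z / r)"
  using continuous_piecewise_affine_cmult[OF assms, of "1 / r"] by simp

lemma continuous_piecewise_affine_sum:
  assumes "\<And>i. i \<in> I \<Longrightarrow> continuous_piecewise_affine (F i)"
  shows "continuous_piecewise_affine (\<lambda>z. \<Sum>i\<in>I. F i z)"
  using assms
  by (induction I rule: infinite_finite_induct)
    (auto intro: continuous_piecewise_affine_add continuous_piecewise_affine_const)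

lemma continuous_piecewise_affine_select:
  assumes "continuous_piecewise_affine F" "continuous_piecewise_affine G"
    and "continuous_on UNIV H" "\<And>z. H z = F z \<or> H z = G z"
  shows "continuous_piecewise_affine H"
proof -
  obtain A where A: "finite A" "\<And>z. \<exists>(m, c)\<in>A. F z = m * z + c"
    using assms(1) unfolding continuous_piecewise_affine_def by blast
  obtain B where B: "finite B" "\<And>z. \<exists>(m, c)\<in>B. G z = m * z + c"
    using assms(2) unfolding continuous_piecewise_affine_def by blast
  have "\<exists>(m, c)\<in>A \<union> B. H z = m * z + c" for z
    using assms(4)[of z] A(2)[of z] B(2)[of z] by (metis UnCI)
  with assms(3) A(1) B(1) show ?thesis
    by (intro continuous_piecewise_affineI[of _ "A \<union> B"]) auto
qed

lemma continuous_piecewise_affine_min: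
  assumes "continuous_piecewise_affine F" "continuous_piecewise_affine G"
  shows "continuous_piecewise_affine (\<lambda>z. min (F z) (G z))"
  using assms
  by (intro continuous_piecewise_affine_select[OF assms] continuous_intros)
    (auto simp: continuous_piecewise_affine_def min_def)

lemma continuous_piecewise_affine_max:
  assumes "continuous_piecewise_affine F" "continuous_piecewise_affine G"
  shows "continuous_piecewise_affine (\<lambda>z. max (F z) (G z))"
  using assms
  by (intro continuous_piecewise_affine_select[OF assms] continuous_intros)
    (auto simp: continuous_piecewise_affine_def max_def)

text \<open>Between two crossings of pieces, the sets where \<open>F\<close> follows a given piece are disjoint
  and relatively closed, so by connectedness a single piece covers the whole interval.\<close>

lemma affine_between_crossings:
  fixes F :: "real \<Rightarrow> real" and A :: "(real \<times> real) set"
  assumes cont: "continuous_on {x..y} F" and "x < y" and "finite A"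
    and pieces: "\<And>z. \<exists>(m, c)\<in>A. F z = m * z + c"
    and no_crossing: "\<And>z m c m' c'. z \<in> {x<..<y} \<Longrightarrow> (m, c) \<in> A \<Longrightarrow> (m', c') \<in> A \<Longrightarrow>
      m * z + c = m' * z + c' \<Longrightarrow> (m, c) = (m', c')"
  shows "\<exists>m c. \<forall>z\<in>{x..y}. F z = m * z + c"
proof -
  define S where "S = {x<..<y}"
  define E where "E = (\<lambda>(m, c). {z \<in> S. F z - (m * z + c) = 0})"
  define mid where "mid = (x + y) / 2"
  obtain m0 c0 where piece0: "(m0, c0) \<in> A" "F mid = m0 * mid + c0"
    using pieces by blast
  have "continuous_on S (\<lambda>z. F z - (m * z + c))" for m c
    unfolding S_def by (auto intro!: continuous_intros intro: continuous_on_subset[OF cont])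
  then have closed: "closedin (top_of_set S) (E (m, c))" for m c
    unfolding E_def prod.case by (rule continuous_closedin_preimage_constant)
  let ?E1 = "E (m0, c0)" and ?E2 = "\<Union>(E ` (A - {(m0, c0)}))"
  have E2_closed: "closedin (top_of_set S) ?E2"
    using \<open>finite A\<close> closed by (intro closedin_Union) (auto simp: split_paired_all)
  have cover: "S \<subseteq> ?E1 \<union> ?E2"
  proof
    fix z assume "z \<in> S"
    obtain m c where "(m, c) \<in> A" "F z = m * z + c"
      using pieces[of z] by blast
    with \<open>z \<in> S\<close> show "z \<in> ?E1 \<union> ?E2"
      unfolding E_def by (cases "(m, c) = (m0, c0)") auto
  qed
  have "z \<notin> E (m, c)" if "z \<in> ?E1" "(m, c) \<in> A - {(m0, c0)}" for z m c
    using that no_crossing[of z m0 c0 m c] piece0(1) unfolding E_def S_def by auto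
  then have disjoint: "?E1 \<inter> ?E2 = {}"
    by (auto simp: split_paired_all)
  have "mid \<in> S"
    using \<open>x < y\<close> unfolding S_def mid_def by simp
  with piece0(2) have "mid \<in> ?E1"
    unfolding E_def by simp
  then have "?E1 \<noteq> {}"
    by blast
  then have "\<not> connected S" if "?E2 \<noteq> {}"
    using closed[of m0 c0] E2_closed cover disjoint that
    unfolding connected_closedin not_not by (intro exI[of _ ?E1] exI[of _ ?E2] conjI)
  then have "?E2 = {}"
    unfolding S_def using connected_Ioo by blast
  with cover have "S \<subseteq> ?E1"
    by simp
  then have on_S: "F z - (m0 * z + c0) = 0" if "z \<in> S" for z
    using that unfolding E_def by auto
  have closure_S: "closure S = {x..y}"
    using \<open>x < y\<close> unfolding S_def by simp
  have "continuous_on (closure S) (\<lambda>z. F z - (m0 * z + c0))"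
    unfolding closure_S by (auto intro!: continuous_intros cont)
  then have "F z - (m0 * z + c0) = 0" if "z \<in> {x..y}" for z
    using on_S that unfolding closure_S[symmetric] by (rule continuous_constant_on_closure)
  then show ?thesis
    by (intro exI[of _ m0] exI[of _ c0]) auto
qed

lemma continuous_piecewise_affine_imp_piecewise_linear_from:
  assumes "continuous_piecewise_affine F"
  shows "piecewise_linear_from a F"
proof -
  obtain A where cont: "continuous_on UNIV F" and "finite A"
    and pieces: "\<And>z. \<exists>(m, c)\<in>A. F z = m * z + c"
    using assms unfolding continuous_piecewise_affine_def by blast
  define B where "B = {z. \<exists>(m, c)\<in>A. \<exists>(m', c')\<in>A. (m, c) \<noteq> (m', c') \<and> m * z + c = m' * z + c'}"
  have "B \<subseteq> (\<lambda>((m, c), (m', c')). (c' - c) / (m - m')) ` (A \<times> A)"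
  proof
    fix z assume "z \<in> B"
    then obtain m c m' c' where mc: "(m, c) \<in> A" "(m', c') \<in> A" "(m, c) \<noteq> (m', c')"
      and eq: "m * z + c = m' * z + c'"
      unfolding B_def by blast
    then have "m \<noteq> m'"
      by auto
    with eq have "z = (c' - c) / (m - m')"
      by (simp add: field_simps)
    with mc show "z \<in> (\<lambda>((m, c), (m', c')). (c' - c) / (m - m')) ` (A \<times> A)"
      by (auto intro: rev_image_eqI[of "((m, c), (m', c'))"])
  qed
  then have "finite B"
    using \<open>finite A\<close> by (auto intro: finite_subset)
  moreover have "\<exists>m c. \<forall>z\<in>{x..y}. F z = m * z + c" if "x < y" "{x<..<y} \<inter> B = {}" for x y
  proof (rule affine_between_crossings[OF continuous_on_subset[OF cont subset_UNIV] that(1)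
        \<open>finite A\<close> pieces])
    show "(m, c) = (m', c')"
      if "z \<in> {x<..<y}" "(m, c) \<in> A" "(m', c') \<in> A" "m * z + c = m' * z + c'" for z m c m' c'
      using that \<open>{x<..<y} \<inter> B = {}\<close> unfolding B_def by blast
  qed
  ultimately show ?thesis
    unfolding piecewise_linear_from_def by blast
qed

lemma piecewise_linear_from_cong:
  assumes "piecewise_linear_from a F" "\<And>z. a \<le> z \<Longrightarrow> f z = F z"
  shows "piecewise_linear_from a f"
  using assms unfolding piecewise_linear_from_def
  by (metis (no_types, lifting) atLeastAtMost_iff order_trans)

lemma MRI_nonneg_if_antimono:
  assumes antimono: "\<And>x y. a \<le> x \<Longrightarrow> x \<le> y \<Longrightarrow> f y \<le> f x" and "a \<le> q" and "MRI_is f {a..} q m"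
  shows "0 \<le> m"
proof -
  obtain d where d: "(f has_real_derivative d) (at q within {a..})" and m: "m = - d"
    using assms(3) unfolding MRI_is_def by blast
  have "(f has_real_derivative d) (at q within {q<..})"
    using \<open>a \<le> q\<close> by (auto intro: has_field_derivative_subset[OF d])
  then have "((\<lambda>y. (f y - f q) / (y - q)) \<longlongrightarrow> d) (at_right q)"
    by (simp add: has_field_derivative_iff)
  moreover have "\<forall>\<^sub>F y in at_right q. (f y - f q) / (y - q) \<le> 0"
    using eventually_at_right_less
  proof (rule eventually_mono)
    fix y assume "q < y"
    with antimono[of q y] \<open>a \<le> q\<close> show "(f y - f q) / (y - q) \<le> 0"
      by (simp add: divide_nonpos_pos)
  qed
  ultimately have "d \<le> 0"
    by (simp add: tendsto_upperbound)
  then show ?thesis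
    using m by simp
qed

lemma antimono_piecewise_affine_curve:
  assumes F: "continuous_piecewise_affine F" and f_eq: "\<forall>z\<ge>a. f z = F z"
    and antimono: "\<forall>x y. a \<le> x \<longrightarrow> x \<le> y \<longrightarrow> f y \<le> f x"
  shows "continuous_on {a..} f \<and> piecewise_linear_from a f \<and>
    (\<forall>x y. a \<le> x \<longrightarrow> x \<le> y \<longrightarrow> f y \<le> f x) \<and> (\<forall>q m. a \<le> q \<longrightarrow> MRI_is f {a..} q m \<longrightarrow> 0 \<le> m)"
proof (intro conjI allI impI)
  have "continuous_on {a..} F"
    using F unfolding continuous_piecewise_affine_def by (auto intro: continuous_on_subset)
  moreover have "continuous_on {a..} f \<longleftrightarrow> continuous_on {a..} F"
    using f_eq by (intro continuous_on_cong) auto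
  ultimately show "continuous_on {a..} f"
    by simp
  show "piecewise_linear_from a f"
    using f_eq
    by (intro piecewise_linear_from_cong[OF continuous_piecewise_affine_imp_piecewise_linear_from[OF F]])
      simp
qed (use antimono MRI_nonneg_if_antimono in blast)+

text \<open>At most one of \<^term>\<open>pplus p\<close> and \<^term>\<open>pminus p\<close> is non-zero, so every hour
  either charges or discharges as much as the power limit and the storage bounds allow.\<close>

fun greedy_level :: "real \<Rightarrow> real \<Rightarrow> real \<Rightarrow> real \<Rightarrow> (nat \<Rightarrow> real) \<Rightarrow> nat \<Rightarrow> real" where
  "greedy_level eta Sbar xbar S0 P 0 = S0"
| "greedy_level eta Sbar xbar S0 P (Suc t) =
     max 0 (min Sbar (greedy_level eta Sbar xbar S0 P t
       + min xbar (eta * pplus (P (Suc t))) - min xbar (pminus (P (Suc t)))))"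

lemma pplus_pminus_cases:
  obtains "pplus p = p" "pminus p = 0" "0 \<le> p" | "pplus p = 0" "pminus p = - p" "p < 0"
  unfolding pplus_def pminus_def by (cases "0 \<le> p") auto

lemma feasible_stepD:
  assumes "feasible eta Sbar xbar S0 T P S" "Suc n \<le> T"
  shows "0 \<le> S (Suc n)" "S (Suc n) \<le> Sbar" "- xbar \<le> S (Suc n) - S n" "S (Suc n) - S n \<le> xbar"
    "- pminus (P (Suc n)) \<le> S (Suc n) - S n" "S (Suc n) - S n \<le> eta * pplus (P (Suc n))"
  using assms unfolding feasible_def by (auto dest!: bspec[of _ _ "Suc n"])

lemma greedy_level_bounds:
  assumes "0 \<le> S0" "S0 \<le> Sbar"
  shows "0 \<le> greedy_level eta Sbar xbar S0 P t \<and> greedy_level eta Sbar xbar S0 P t \<le> Sbar"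
  using assms by (cases t) auto

lemma greedy_level_step:
  fixes eta Sbar xbar S0 :: real and P :: "nat \<Rightarrow> real"
  assumes "0 \<le> eta" "0 \<le> S0" "S0 \<le> Sbar" "0 \<le> xbar"
  defines "G \<equiv> greedy_level eta Sbar xbar S0 P"
  shows "- min xbar (pminus (P (Suc n))) \<le> G (Suc n) - G n"
    and "G (Suc n) - G n \<le> min xbar (eta * pplus (P (Suc n)))"
proof -
  define c where "c = min xbar (eta * pplus (P (Suc n)))"
  define d where "d = min xbar (pminus (P (Suc n)))"
  have "0 \<le> G n" "G n \<le> Sbar"
    using greedy_level_bounds[OF assms(2,3)] unfolding G_def by auto
  moreover have "0 \<le> c \<and> 0 \<le> d \<and> (c = 0 \<or> d = 0)"
    using assms(1,4) unfolding c_def d_def by (cases "P (Suc n)" rule: pplus_pminus_cases) auto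
  moreover have "G (Suc n) = max 0 (min Sbar (G n + c - d))"
    unfolding G_def c_def d_def by simp
  ultimately show "- d \<le> G (Suc n) - G n" "G (Suc n) - G n \<le> c"
    by auto
qed

lemma greedy_level_feasible:
  assumes "0 \<le> eta" "0 \<le> S0" "S0 \<le> Sbar" "0 \<le> xbar"
  shows "feasible eta Sbar xbar S0 T P (greedy_level eta Sbar xbar S0 P)"
  unfolding feasible_def
proof (rule conjI[OF _ ballI])
  fix t assume "t \<in> {1..T}"
  then obtain n where t: "t = Suc n"
    by (cases t) auto
  let ?G = "greedy_level eta Sbar xbar S0 P"
  have "0 \<le> ?G t" "?G t \<le> Sbar"
    using greedy_level_bounds[OF assms(2,3)] by auto
  moreover have "- min xbar (pminus (P t)) \<le> ?G t - ?G (t - 1)"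
    "?G t - ?G (t - 1) \<le> min xbar (eta * pplus (P t))"
    unfolding t using greedy_level_step[OF assms] by auto
  ultimately show "0 \<le> ?G t \<and> ?G t \<le> Sbar \<and> - xbar \<le> ?G t - ?G (t - 1) \<and> ?G t - ?G (t - 1) \<le> xbar \<and>
      - pminus (P t) \<le> ?G t - ?G (t - 1) \<and> ?G t - ?G (t - 1) \<le> eta * pplus (P t)"
    by linarith
qed simp

lemma objective_Suc: "objective (Suc n) S = objective n S + min 0 (S (Suc n) - S n)"
  unfolding objective_def by (simp add: sum.cl_ivl_Suc)

text \<open>\<^term>\<open>objective n S\<close> is minus the energy discharged up to hour \<open>n\<close>, and
  \<^term>\<open>objective n S - S n\<close> is minus \<open>S0\<close> minus the energy charged: the greedy trajectory
  is ahead in both.\<close>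

lemma greedy_level_dominates:
  assumes "0 \<le> S0" "S0 \<le> Sbar" and S: "feasible eta Sbar xbar S0 T P S" and "n \<le> T"
  shows "objective n (greedy_level eta Sbar xbar S0 P) \<le> objective n S \<and>
    objective n (greedy_level eta Sbar xbar S0 P) - greedy_level eta Sbar xbar S0 P n \<le> objective n S - S n"
  using \<open>n \<le> T\<close>
proof (induction n)
  case 0
  with S show ?case
    by (simp add: feasible_def objective_def)
next
  case (Suc n)
  let ?G = "greedy_level eta Sbar xbar S0 P"
  note feasible_stepD[OF S Suc.prems]
  moreover have "0 \<le> ?G n" "?G n \<le> Sbar"
    using greedy_level_bounds[OF assms(1,2)] by auto
  moreover have "objective n ?G \<le> objective n S" "objective n ?G - ?G n \<le> objective n S - S n"
    using Suc by auto
  ultimately show ?case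
    unfolding objective_Suc by (cases "P (Suc n)" rule: pplus_pminus_cases) (auto simp: min_def max_def)
qed

lemma optval_eq_greedy:
  assumes "0 \<le> eta" "0 \<le> S0" "S0 \<le> Sbar" "0 \<le> xbar"
  shows "optval eta Sbar xbar S0 T P = objective T (greedy_level eta Sbar xbar S0 P)"
  unfolding optval_def
proof (rule cInf_eq_minimum)
  show "objective T (greedy_level eta Sbar xbar S0 P) \<in> {objective T S |S. feasible eta Sbar xbar S0 T P S}"
    using greedy_level_feasible[OF assms] by blast
next
  fix v assume "v \<in> {objective T S |S. feasible eta Sbar xbar S0 T P S}"
  then show "objective T (greedy_level eta Sbar xbar S0 P) \<le> v"
    using greedy_level_dominates[OF assms(2,3)] by auto
qed

lemma feasible_mono:
  assumes "feasible eta Sbar xbar S0 T P S" "Sbar \<le> Sbar'" "xbar \<le> xbar'"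
  shows "feasible eta Sbar' xbar' S0 T P S"
  using assms unfolding feasible_def by force

lemma optval_antimono:
  assumes "0 \<le> eta" "0 \<le> S0" "S0 \<le> Sbar" "0 \<le> xbar" "Sbar \<le> Sbar'" "xbar \<le> xbar'"
  shows "optval eta Sbar' xbar' S0 T P \<le> optval eta Sbar xbar S0 T P"
proof -
  have "feasible eta Sbar' xbar' S0 T P (greedy_level eta Sbar xbar S0 P)"
    using feasible_mono[OF greedy_level_feasible[OF assms(1-4)] assms(5,6)] .
  then show ?thesis
    using assms greedy_level_dominates[of S0 Sbar' eta xbar' T P] optval_eq_greedy by simp
qed

lemma EUE_antimono:
  assumes "0 \<le> eta" "0 \<le> S0" "S0 \<le> Sbar" "0 \<le> xbar" "Sbar \<le> Sbar'" "xbar \<le> xbar'"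
  shows "EUE eta Sbar' xbar' S0 T K P \<le> EUE eta Sbar xbar S0 T K P"
  unfolding EUE_def
  by (intro divide_right_mono sum_mono add_left_mono optval_antimono assms) simp

lemma continuous_piecewise_affine_greedy_level:
  assumes "continuous_piecewise_affine Sbar" "continuous_piecewise_affine xbar"
  shows "continuous_piecewise_affine (\<lambda>z. greedy_level eta (Sbar z) (xbar z) S0 P t)"
  by (induction t) (auto intro!: assms continuous_piecewise_affine_min continuous_piecewise_affine_max
      continuous_piecewise_affine_add continuous_piecewise_affine_diff continuous_piecewise_affine_const)

lemma continuous_piecewise_affine_objective:
  assumes "\<And>t. continuous_piecewise_affine (\<lambda>z. S z t)"
  shows "continuous_piecewise_affine (\<lambda>z. objective T (S z))"
  unfolding objective_def
  by (intro continuous_piecewise_affine_sum continuous_piecewise_affine_min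
      continuous_piecewise_affine_const continuous_piecewise_affine_diff assms)

lemma EUE_piecewise_affine:
  assumes "0 \<le> eta" "0 \<le> S0" "continuous_piecewise_affine Sbar" "continuous_piecewise_affine xbar"
  obtains F where "continuous_piecewise_affine F"
    "\<forall>z. S0 \<le> Sbar z \<longrightarrow> 0 \<le> xbar z \<longrightarrow> EUE eta (Sbar z) (xbar z) S0 T K P = F z"
proof
  show "continuous_piecewise_affine (\<lambda>z. (\<Sum>k<K. (\<Sum>t=1..T. pminus (P k t))
      + objective T (greedy_level eta (Sbar z) (xbar z) S0 (P k))) / real K)"
    by (intro continuous_piecewise_affine_divide continuous_piecewise_affine_sum
        continuous_piecewise_affine_add continuous_piecewise_affine_const
        continuous_piecewise_affine_objective continuous_piecewise_affine_greedy_level assms(3,4))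
qed (use assms(1,2) in \<open>simp add: EUE_def optval_eq_greedy\<close>)

theorem mainTheorem7:
  fixes eta Sbar xbar S0 :: real and T K :: nat and P :: "nat \<Rightarrow> nat \<Rightarrow> real"
  assumes "0 < eta" and "eta \<le> 1"
    and "0 \<le> S0" and "S0 \<le> Sbar" and "0 \<le> xbar" and "0 < K"
  shows "(\<forall>k<K. \<exists>S. feasible eta Sbar xbar S0 T (P k) S)
    \<and> (let f = (\<lambda>s. EUE eta s xbar S0 T K P) in
         continuous_on {S0..} f \<and> piecewise_linear_from S0 f \<and>
         (\<forall>x y. S0 \<le> x \<longrightarrow> x \<le> y \<longrightarrow> f y \<le> f x) \<and>
         (\<forall>q m. S0 \<le> q \<longrightarrow> MRI_is f {S0..} q m \<longrightarrow> 0 \<le> m))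
    \<and> (let g = (\<lambda>x. EUE eta Sbar x S0 T K P) in
         continuous_on {0..} g \<and> piecewise_linear_from 0 g \<and>
         (\<forall>x y. 0 \<le> x \<longrightarrow> x \<le> y \<longrightarrow> g y \<le> g x) \<and>
         (\<forall>q m. 0 \<le> q \<longrightarrow> MRI_is g {0..} q m \<longrightarrow> 0 \<le> m))"
proof -
  have eta_nonneg: "0 \<le> eta"
    using \<open>0 < eta\<close> by simp
  note EUE_affine = EUE_piecewise_affine[where T = T and K = K and P = P, OF eta_nonneg \<open>0 \<le> S0\<close>]
  obtain F where F: "continuous_piecewise_affine F"
    and F_eq: "\<forall>s\<ge>S0. EUE eta s xbar S0 T K P = F s"
    using EUE_affine[OF continuous_piecewise_affine_ident continuous_piecewise_affine_const[of xbar]]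
      \<open>0 \<le> xbar\<close> by auto
  obtain G where G: "continuous_piecewise_affine G"
    and G_eq: "\<forall>x\<ge>0. EUE eta Sbar x S0 T K P = G x"
    using EUE_affine[OF continuous_piecewise_affine_const[of Sbar] continuous_piecewise_affine_ident]
      \<open>S0 \<le> Sbar\<close> by auto
  have "\<forall>k<K. \<exists>S. feasible eta Sbar xbar S0 T (P k) S"
    using greedy_level_feasible[OF eta_nonneg assms(3-5)] by blast
  moreover have "\<forall>x y. S0 \<le> x \<longrightarrow> x \<le> y \<longrightarrow> EUE eta y xbar S0 T K P \<le> EUE eta x xbar S0 T K P"
    using EUE_antimono[OF eta_nonneg assms(3) _ assms(5) _ order_refl] by blast
  note antimono_piecewise_affine_curve[OF F F_eq this]
  moreover have "\<forall>x y. 0 \<le> x \<longrightarrow> x \<le> y \<longrightarrow> EUE eta Sbar y S0 T K P \<le> EUE eta Sbar x S0 T K P"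
    using EUE_antimono[OF eta_nonneg assms(3,4) _ order_refl] by blast
  note antimono_piecewise_affine_curve[OF G G_eq this]
  ultimately show ?thesis
    unfolding Let_def by blast
qed

end
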